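(* Let $K\ge2$, $a\ge0$ and $b>aK$. Let $\mathbf v=(-a+b,-b,0,\dots,0)'\in\mathbb{R}^K$ and $v(t)=t\mathbf v$, $t\ge0$. Then the solution of the Skorokhod problem for $v$ with respect to the matrix $\mathscr R$ satisfies $\Gamma_2(v)(t)=t\mathbf v_1$ for all $t\ge0$, where $\mathbf v_1=(b/K-a,0,\dots,0)'$.
   Context: $\mathscr R$ is the $K\times K$ matrix with $\mathscr R_{ii}=1$ for all $i$, $\mathscr R_{i,i+1}=-1/2$ for $i\le K-1$, $\mathscr R_{2,1}=-1$, $\mathscr R_{i,i-1}=-1/2$ for $3\le i\le K$, and all other entries $0$. For a right-continuous-with-left-limits path $x:[0,\infty)\to\mathbb{R}^K$ with $x(0)\ge0$, the Skorokhod problem for $x$ with respect to $\mathscr R$ has a unique solution $(\eta,y)$ of $\mathbb{R}_+^K$-valued paths such that $y(t)=x(t)+\mathscr R\eta(t)$ for all $t$, and for each $i$: $\eta_i(0)=0$, $\eta_i$ is nondecreasing, and $\int_0^\infty y_i(t)d\eta_i(t)=0$. Write $\Gamma(x)=(\Gamma_1(x),\Gamma_2(x))=(\eta,y)$. *)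

theory Defs
  imports "HOL-Analysis.Analysis"
begin

text \<open>Paths with values in R^K are represented as functions  real => nat => real,
  components indexed by 1..K.  Convention: a path is only relevant for t >= 0 and
  indices in 1..K; the solution paths of the Skorokhod problem are normalised to be 0
  for t < 0 and for indices outside 1..K (so that the solution is unique as an object).\<close>

definition Rmat :: "nat \<Rightarrow> nat \<Rightarrow> nat \<Rightarrow> real" where
  "Rmat K i j =
     (if i = j then 1
      else if j = i + 1 \<and> i \<le> K - 1 then - 1 / 2
      else if i = 2 \<and> j = 1 then - 1
      else if 3 \<le> i \<and> i \<le> K \<and> j + 1 = i then - 1 / 2
      else 0)"

text \<open>The integral of y_i against d eta_i over [0,oo) is the Lebesgue--Stieltjes integral
  (eta_i is nondecreasing and right-continuous, extended by 0 to t < 0, so there is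
  no atom at 0 since eta_i(0) = 0).\<close>

definition SP_sol :: "nat \<Rightarrow> (real \<Rightarrow> nat \<Rightarrow> real) \<Rightarrow> (real \<Rightarrow> nat \<Rightarrow> real)
                       \<Rightarrow> (real \<Rightarrow> nat \<Rightarrow> real) \<Rightarrow> bool" where
  "SP_sol K x eta y \<longleftrightarrow>
     (\<forall>t i. (t < 0 \<or> i \<notin> {1..K}) \<longrightarrow> eta t i = 0 \<and> y t i = 0) \<and>
     (\<forall>t \<ge> 0. \<forall>i \<in> {1..K}. y t i = x t i + (\<Sum>j = 1..K. Rmat K i j * eta t j)) \<and>
     (\<forall>t \<ge> 0. \<forall>i \<in> {1..K}. 0 \<le> y t i \<and> 0 \<le> eta t i) \<and>
     (\<forall>i \<in> {1..K}. eta 0 i = 0) \<and>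
     (\<forall>i \<in> {1..K}. mono (\<lambda>t. eta t i)) \<and>
     (\<forall>i \<in> {1..K}. \<forall>t. continuous (at_right t) (\<lambda>s. eta s i)) \<and>
     (\<forall>i \<in> {1..K}.
        (\<integral>\<^sup>+ t. ennreal (y t i) * indicator {0..} t \<partial>interval_measure (\<lambda>s. eta s i)) = 0)"

definition Gamma :: "nat \<Rightarrow> (real \<Rightarrow> nat \<Rightarrow> real)
                       \<Rightarrow> (real \<Rightarrow> nat \<Rightarrow> real) \<times> (real \<Rightarrow> nat \<Rightarrow> real)" where
  "Gamma K x = (THE p. SP_sol K x (fst p) (snd p))"

definition Gamma1 where "Gamma1 K x = fst (Gamma K x)"
definition Gamma2 where "Gamma2 K x = snd (Gamma K x)"

end

theory Submission
  imports Defs "HOL-Probability.Distribution_Functions"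
begin

text \<open>The ray \<open>\<eta>(t) = t c\<close> with \<open>c\<^sub>1 = 0\<close> and \<open>c\<^sub>j = 2b(K - j + 1)/K\<close> for \<open>j \<ge> 2\<close> pushes
  exactly enough to cancel the drift in the coordinates \<open>2..K\<close>, leaving \<open>y(t) = t v\<^sub>1\<close>; it
  satisfies complementarity because \<open>\<eta>\<^sub>1\<close> never moves and \<open>y\<^sub>2 = ... = y\<^sub>K = 0\<close>.
  Since \<open>\<Gamma>\<close> is a definite description, uniqueness must be proved as well.  For two solutions
  let \<open>D\<^sub>i\<close> be the supremum of \<open>|\<eta>\<^sub>i - \<eta>'\<^sub>i|\<close> on \<open>[0,T]\<close>.  Each coordinate is a
  one-dimensional reflection of its free part \<open>x\<^sub>i - ((I - R)\<eta>)\<^sub>i\<close>, and the comparison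
  principle for the one-dimensional reflection map gives \<open>D \<le> (I - R) D\<close>.  Along the chain
  \<open>1 - 2 - ... - K\<close> this forces \<open>D\<^sub>1 \<le> D\<^sub>2 \<le> ... \<le> D\<^sub>K \<le> D\<^sub>K / 2\<close>, so \<open>D = 0\<close>.\<close>

lemma interval_measure_null_where_integrand_pos:
  fixes F f :: "real \<Rightarrow> real"
  assumes f: "f \<in> borel_measurable borel"
    and int0: "(\<integral>\<^sup>+ t. ennreal (f t) * indicator {0..} t \<partial>interval_measure F) = 0"
    and N: "N \<in> sets borel" "\<And>t. t \<in> N \<Longrightarrow> 0 \<le> t \<and> 0 < f t"
  shows "emeasure (interval_measure F) N = 0"
proof -
  have "(\<lambda>t. ennreal (f t) * indicator {0..} t) \<in> borel_measurable (interval_measure F)"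
    using f by measurable
  then have "AE t in interval_measure F. ennreal (f t) * indicator {0..} t = 0"
    using int0 by (simp add: nn_integral_0_iff_AE)
  then have "AE t in interval_measure F. t \<notin> N"
    by eventually_elim (use N(2) in \<open>fastforce simp: indicator_def\<close>)
  then show ?thesis
    using N(1) by (simp add: AE_iff_measurable[OF _ refl])
qed

lemma interval_measure_Ioc_null_imp_eq:
  fixes F :: "real \<Rightarrow> real"
  assumes F: "mono F" "\<And>a. continuous (at_right a) F"
    and s: "s \<le> u" and null: "emeasure (interval_measure F) {s<..u} = 0"
  shows "F u = F s"
proof -
  have "ennreal (F u - F s) = 0"
    using null s F by (simp add: emeasure_interval_measure_Ioc mono_def)
  then show ?thesis
    using F(1) s by (simp add: ennreal_eq_0_iff mono_def antisym)
qed

lemma interval_measure_singleton_null_imp_left_gap: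
  fixes F :: "real \<Rightarrow> real"
  assumes F: "mono F" "\<And>a. continuous (at_right a) F"
    and atom: "emeasure (interval_measure F) {s} = 0" and e: "0 < e"
  shows "\<exists>r<s. F s - F r < e"
proof -
  define A where "A n = {s - 1 / real (Suc n)<..s}" for n
  have A_measure: "emeasure (interval_measure F) (A n) = ennreal (F s - F (s - 1 / real (Suc n)))" for n
    unfolding A_def using F by (intro emeasure_interval_measure_Ioc) (auto simp: mono_def)
  have "1 / real (Suc n) \<le> 1 / real (Suc m)" if "m \<le> n" for m n
    using that by (simp add: frac_le)
  then have "decseq A"
    unfolding decseq_def A_def by fastforce
  moreover have "(\<Inter>n. A n) = {s}"
  proof (intro equalityI subsetI)
    fix x assume x: "x \<in> (\<Inter>n. A n)"
    have "\<not> x < s"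
    proof
      assume "x < s"
      then obtain n where "inverse (real (Suc n)) < s - x" using reals_Archimedean[of "s - x"] by auto
      moreover have "x \<in> A n" using x by blast
      ultimately show False by (auto simp: A_def field_simps)
    qed
    with x show "x \<in> {s}" by (auto simp: A_def)
  qed (auto simp: A_def)
  ultimately have "(INF n. emeasure (interval_measure F) (A n)) = 0"
    using atom A_measure by (subst INF_emeasure_decseq') (auto simp: A_def)
  then obtain n where "ennreal (F s - F (s - 1 / real (Suc n))) < ennreal e"
    using e A_measure by (metis INF_less_iff ennreal_0 ennreal_less_zero_iff)
  then have "F s - F (s - 1 / real (Suc n)) < e"
    by (meson ennreal_leI not_le)
  then show ?thesis
    by (intro exI[of _ "s - 1 / real (Suc n)"]) auto
qed

text \<open>\<open>Roff K f = (I - R) f\<close>: minus the off-diagonal part of \<open>R\<close>, applied to \<open>f\<close>.\<close>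

definition Roff :: "nat \<Rightarrow> (nat \<Rightarrow> real) \<Rightarrow> nat \<Rightarrow> real" where
  "Roff K f i = (if i + 1 \<le> K then f (i + 1) / 2 else 0) + (if i = 2 then f 1 else 0)
              + (if 3 \<le> i then f (i - 1) / 2 else 0)"

lemma sum_Rmat_eq:
  assumes "i \<in> {1..K}"
  shows "(\<Sum>j = 1..K. Rmat K i j * f j) = f i - Roff K f i"
proof -
  have "Rmat K i j * f j = (if j = i then f j else 0) - (if j = i + 1 \<and> i + 1 \<le> K then f j / 2 else 0)
      - (if j = 1 \<and> i = 2 then f j else 0) - (if j = i - 1 \<and> 3 \<le> i then f j / 2 else 0)" for j
    using assms by (auto simp: Rmat_def)
  then show ?thesis
    using assms by (auto simp: sum_subtractf Roff_def)
qed

lemma Roff_nonneg: "(\<And>j. 0 \<le> f j) \<Longrightarrow> 0 \<le> Roff K f i"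
  by (simp add: Roff_def)

lemma Roff_diff_le:
  assumes "\<And>j. f j - g j \<le> D j"
  shows "Roff K f i - Roff K g i \<le> Roff K D i"
  using assms[of "i + 1"] assms[of 1] assms[of "i - 1"] by (auto simp: Roff_def)

lemma Roff_subinvariant_eq_0:
  fixes D :: "nat \<Rightarrow> real"
  assumes K: "2 \<le> K" and D: "\<And>i. i \<in> {1..K} \<Longrightarrow> 0 \<le> D i \<and> D i \<le> Roff K D i"
    and i: "i \<in> {1..K}"
  shows "D i = 0"
proof -
  have D1: "D 1 \<le> D 2 / 2"
    using D[of 1] K by (simp add: Roff_def numeral_2_eq_2)
  have incr: "D i \<le> D (i + 1)" if "2 \<le> i" "i + 1 \<le> K" for i
    using that
  proof (induction i rule: dec_induct)
    case base
    then show ?case using D[of 2] D1 by (simp add: Roff_def)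
  next
    case (step n)
    have "D (n + 1) \<le> D (n + 2) / 2 + D n / 2"
      using D[of "n + 1"] step by (simp add: Roff_def)
    then show ?case using step by simp
  qed
  have up: "D i \<le> D K" if "2 \<le> i" "i \<le> K" for i
    using that(2,1)
  proof (induction i rule: inc_induct)
    case (step n)
    then show ?case using incr[of n] by simp
  qed simp
  have "D K \<le> 0"
  proof (cases "K = 2")
    case True
    then show ?thesis using D[of 2] D1 by (simp add: Roff_def)
  next
    case False
    then have "D K \<le> D (K - 1) / 2" using D[of K] K by (simp add: Roff_def)
    moreover have "D (K - 1) \<le> D K" using up[of "K - 1"] False K by simp
    ultimately show ?thesis by simp
  qed
  then show ?thesis
    using up[of i] up[of 2] D1 D[of i] D[of 1] i K by (cases "i = 1") auto
qed

lemma reflection_comparison: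
  fixes et et' y y' :: "real \<Rightarrow> real" and t m :: real
  assumes mono: "mono et" "mono et'" and start: "et 0 = 0" "et' 0 = 0"
    and t: "0 \<le> t" and m: "0 \<le> m"
    and free_diff: "\<And>s. 0 \<le> s \<Longrightarrow> s \<le> t \<Longrightarrow> - m \<le> (y s - et s) - (y' s - et' s)"
    and y'_nonneg: "\<And>s. 0 \<le> s \<Longrightarrow> 0 \<le> y' s"
    and flat: "\<And>s u. 0 \<le> s \<Longrightarrow> s \<le> u \<Longrightarrow> (\<And>v. v \<in> {s<..u} \<Longrightarrow> 0 < y v) \<Longrightarrow> et u = et s"
    and left_gap: "\<And>s e. 0 \<le> s \<Longrightarrow> 0 < y s \<Longrightarrow> 0 < e \<Longrightarrow> \<exists>r<s. et s - et r < e"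
  shows "et t - et' t \<le> m"
proof -
  txt \<open>At the last time \<open>s0\<close> where the bound holds, \<open>et\<close> has no upward jump since \<open>y > 0\<close>
    there; after \<open>s0\<close> the bound fails, so again \<open>y > 0\<close> and \<open>et\<close> stays flat.\<close>
  define S where "S = {s. 0 \<le> s \<and> s \<le> t \<and> et s - et' s \<le> m}"
  define s0 where "s0 = Sup S"
  have "0 \<in> S" using start t m by (simp add: S_def)
  have bdd: "bdd_above S" by (auto simp: S_def bdd_above_def)
  have s0: "0 \<le> s0" "s0 \<le> t"
    unfolding s0_def using \<open>0 \<in> S\<close> bdd by (auto intro: cSup_upper cSup_least simp: S_def)
  have y_pos: "0 < y v" if "0 \<le> v" "v \<le> t" "m < et v - et' v" for v
    using free_diff[of v] y'_nonneg[of v] that by linarith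
  have "s0 \<in> S"
  proof (rule ccontr)
    assume "s0 \<notin> S"
    then have gap: "m < et s0 - et' s0" using s0 by (auto simp: S_def)
    then obtain r where r: "r < s0" "et s0 - et r < et s0 - et' s0 - m"
      using left_gap[OF s0(1) y_pos[OF s0 gap], of "et s0 - et' s0 - m"] gap by auto
    then obtain s' where s': "s' \<in> S" "r < s'"
      using less_cSup_iff[of S r] \<open>0 \<in> S\<close> bdd s0_def by auto
    have "s' \<le> s0" using s' bdd cSup_upper s0_def by blast
    then have "et' s' \<le> et' s0" "et r \<le> et s'" using mono s' by (auto simp: mono_def)
    with s' r show False by (auto simp: S_def)
  qed
  have "et t = et s0"
  proof (rule flat[OF s0])
    fix v assume v: "v \<in> {s0<..t}"
    then have "v \<notin> S" using bdd cSup_upper s0_def by fastforce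
    then show "0 < y v" using v s0 by (intro y_pos) (auto simp: S_def)
  qed
  moreover have "et' s0 \<le> et' t" using mono s0 by (auto simp: mono_def)
  ultimately show ?thesis using \<open>s0 \<in> S\<close> by (auto simp: S_def)
qed

lemma
  assumes "SP_sol K x e y"
  shows SP_sol_outside: "\<And>t i. t < 0 \<or> i \<notin> {1..K} \<Longrightarrow> e t i = 0 \<and> y t i = 0"
    and SP_sol_eq: "\<And>t i. 0 \<le> t \<Longrightarrow> i \<in> {1..K} \<Longrightarrow> y t i = x t i + (\<Sum>j = 1..K. Rmat K i j * e t j)"
    and SP_sol_nonneg: "\<And>t i. 0 \<le> t \<Longrightarrow> i \<in> {1..K} \<Longrightarrow> 0 \<le> y t i \<and> 0 \<le> e t i"
    and SP_sol_start: "\<And>i. i \<in> {1..K} \<Longrightarrow> e 0 i = 0"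
    and SP_sol_mono: "\<And>i. i \<in> {1..K} \<Longrightarrow> mono (\<lambda>t. e t i)"
    and SP_sol_right_cont: "\<And>i t. i \<in> {1..K} \<Longrightarrow> continuous (at_right t) (\<lambda>s. e s i)"
    and SP_sol_complementary: "\<And>i. i \<in> {1..K} \<Longrightarrow>
        (\<integral>\<^sup>+ t. ennreal (y t i) * indicator {0..} t \<partial>interval_measure (\<lambda>s. e s i)) = 0"
  using assms unfolding SP_sol_def by blast+

lemma SP_sol_eta_measurable:
  assumes "SP_sol K x e y"
  shows "(\<lambda>t. e t j) \<in> borel_measurable borel"
proof (cases "j \<in> {1..K}")
  case True
  then show ?thesis using SP_sol_mono[OF assms] by (simp add: borel_measurable_mono)
next
  case False
  then have "(\<lambda>t. e t j) = (\<lambda>t. 0)" using SP_sol_outside[OF assms] by auto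
  then show ?thesis by simp
qed

lemma SP_sol_y_measurable:
  assumes S: "SP_sol K x e y" and x: "\<And>i. (\<lambda>t. x t i) \<in> borel_measurable borel"
  shows "(\<lambda>t. y t i) \<in> borel_measurable borel"
proof -
  have [measurable]: "(\<lambda>t. e t j) \<in> borel_measurable borel" for j
    using SP_sol_eta_measurable[OF S] .
  have [measurable]: "(\<lambda>t. x t j) \<in> borel_measurable borel" for j
    using x .
  have "(\<lambda>t. y t i) = (\<lambda>t. if t < 0 \<or> i \<notin> {1..K} then 0 else x t i + (\<Sum>j = 1..K. Rmat K i j * e t j))"
    using SP_sol_outside[OF S] SP_sol_eq[OF S] by (auto simp: not_less)
  also have "\<dots> \<in> borel_measurable borel"
    by measurable
  finally show ?thesis .
qed

lemma SP_sol_eta_flat: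
  assumes S: "SP_sol K x e y" and x: "\<And>i. (\<lambda>t. x t i) \<in> borel_measurable borel"
    and i: "i \<in> {1..K}" and s: "0 \<le> s" "s \<le> u" and pos: "\<And>v. v \<in> {s<..u} \<Longrightarrow> 0 < y v i"
  shows "e u i = e s i"
proof (rule interval_measure_Ioc_null_imp_eq[where F = "\<lambda>t. e t i", OF _ _ s(2)])
  show "mono (\<lambda>t. e t i)" "\<And>a. continuous (at_right a) (\<lambda>t. e t i)"
    using SP_sol_mono[OF S i] SP_sol_right_cont[OF S i] by auto
  show "emeasure (interval_measure (\<lambda>t. e t i)) {s<..u} = 0"
    using SP_sol_y_measurable[OF S x] SP_sol_complementary[OF S i] s pos
    by (intro interval_measure_null_where_integrand_pos) auto
qed

lemma SP_sol_eta_left_gap: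
  assumes S: "SP_sol K x e y" and x: "\<And>i. (\<lambda>t. x t i) \<in> borel_measurable borel"
    and i: "i \<in> {1..K}" and s: "0 \<le> s" "0 < y s i" and "0 < \<epsilon>"
  shows "\<exists>r<s. e s i - e r i < \<epsilon>"
proof (rule interval_measure_singleton_null_imp_left_gap[where F = "\<lambda>t. e t i", OF _ _ _ \<open>0 < \<epsilon>\<close>])
  show "mono (\<lambda>t. e t i)" "\<And>a. continuous (at_right a) (\<lambda>t. e t i)"
    using SP_sol_mono[OF S i] SP_sol_right_cont[OF S i] by auto
  show "emeasure (interval_measure (\<lambda>t. e t i)) {s} = 0"
    using SP_sol_y_measurable[OF S x] SP_sol_complementary[OF S i] s
    by (intro interval_measure_null_where_integrand_pos) auto
qed

definition sup_dev :: "(real \<Rightarrow> nat \<Rightarrow> real) \<Rightarrow> (real \<Rightarrow> nat \<Rightarrow> real) \<Rightarrow> real \<Rightarrow> nat \<Rightarrow> real" where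
  "sup_dev e e' T j = Sup ((\<lambda>s. \<bar>e s j - e' s j\<bar>) ` {0..T})"

lemma sup_dev_commute: "sup_dev e' e T = sup_dev e e' T"
  by (rule ext) (simp add: sup_dev_def abs_minus_commute)

lemma SP_sol_abs_diff_le_sup_dev:
  assumes S: "SP_sol K x e y" "SP_sol K x e' y'" and s: "0 \<le> s" "s \<le> T"
  shows "\<bar>e s j - e' s j\<bar> \<le> sup_dev e e' T j"
  unfolding sup_dev_def
proof (rule cSup_upper)
  have "\<bar>e r j - e' r j\<bar> \<le> e T j + e' T j" if "0 \<le> r" "r \<le> T" for r
  proof (cases "j \<in> {1..K}")
    case True
    then have "0 \<le> e r j" "0 \<le> e' r j" "e r j \<le> e T j" "e' r j \<le> e' T j"
      using SP_sol_nonneg[OF S(1)] SP_sol_nonneg[OF S(2)] SP_sol_mono[OF S(1)] SP_sol_mono[OF S(2)]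
        that by (auto simp: mono_def)
    then show ?thesis by linarith
  next
    case False
    then show ?thesis using SP_sol_outside[OF S(1)] SP_sol_outside[OF S(2)] by simp
  qed
  then show "bdd_above ((\<lambda>s. \<bar>e s j - e' s j\<bar>) ` {0..T})"
    by (intro bdd_aboveI[of _ "e T j + e' T j"]) auto
qed (use s in auto)

lemma SP_sol_sup_dev_nonneg:
  assumes "SP_sol K x e y" "SP_sol K x e' y'" and "0 \<le> T"
  shows "0 \<le> sup_dev e e' T j"
  using SP_sol_abs_diff_le_sup_dev[OF assms(1,2) order_refl assms(3), of j] by linarith

lemma SP_sol_eta_diff_le_Roff:
  assumes x: "\<And>i. (\<lambda>t. x t i) \<in> borel_measurable borel"
    and S: "SP_sol K x e y" "SP_sol K x e' y'"
    and i: "i \<in> {1..K}" and t: "0 \<le> t" "t \<le> T"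
  shows "e t i - e' t i \<le> Roff K (sup_dev e e' T) i"
proof (rule reflection_comparison[where et = "\<lambda>s. e s i" and et' = "\<lambda>s. e' s i"
      and y = "\<lambda>s. y s i" and y' = "\<lambda>s. y' s i"])
  show "mono (\<lambda>t. e t i)" "mono (\<lambda>t. e' t i)"
    using SP_sol_mono[OF S(1) i] SP_sol_mono[OF S(2) i] by auto
  show "e 0 i = 0" "e' 0 i = 0"
    using SP_sol_start[OF S(1) i] SP_sol_start[OF S(2) i] by auto
  show "0 \<le> Roff K (sup_dev e e' T) i"
    using SP_sol_sup_dev_nonneg[OF S] t by (intro Roff_nonneg) auto
  show "- Roff K (sup_dev e e' T) i \<le> (y s i - e s i) - (y' s i - e' s i)" if "0 \<le> s" "s \<le> t" for s
  proof -
    have "e s j - e' s j \<le> sup_dev e e' T j" for j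
      using SP_sol_abs_diff_le_sup_dev[OF S, of s T j] that t by simp
    then have "Roff K (e s) i - Roff K (e' s) i \<le> Roff K (sup_dev e e' T) i"
      by (rule Roff_diff_le)
    moreover have "y s i - e s i = x s i - Roff K (e s) i" "y' s i - e' s i = x s i - Roff K (e' s) i"
      using SP_sol_eq[OF S(1) that(1) i, unfolded sum_Rmat_eq[OF i]]
        SP_sol_eq[OF S(2) that(1) i, unfolded sum_Rmat_eq[OF i]] by simp_all
    ultimately show ?thesis by linarith
  qed
  show "0 \<le> y' s i" if "0 \<le> s" for s
    using SP_sol_nonneg[OF S(2) that i] by simp
  show "e u i = e s i" if "0 \<le> s" "s \<le> u" "\<And>v. v \<in> {s<..u} \<Longrightarrow> 0 < y v i" for s u
    using SP_sol_eta_flat[OF S(1) x i that] .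
  show "\<exists>r<s. e s i - e r i < \<epsilon>" if "0 \<le> s" "0 < y s i" "0 < \<epsilon>" for s \<epsilon>
    using SP_sol_eta_left_gap[OF S(1) x i that] .
qed (use t in auto)

lemma SP_sol_unique:
  assumes K: "2 \<le> K" and x: "\<And>i. (\<lambda>t. x t i) \<in> borel_measurable borel"
    and S: "SP_sol K x e y" "SP_sol K x e' y'"
  shows "e = e' \<and> y = y'"
proof -
  have eta_eq: "e T i = e' T i" if T: "0 \<le> T" and i: "i \<in> {1..K}" for T i
  proof -
    have "0 \<le> sup_dev e e' T k \<and> sup_dev e e' T k \<le> Roff K (sup_dev e e' T) k"
      if k: "k \<in> {1..K}" for k
    proof
      show "0 \<le> sup_dev e e' T k"
        using SP_sol_sup_dev_nonneg[OF S T] .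
      have "\<bar>e s k - e' s k\<bar> \<le> Roff K (sup_dev e e' T) k" if "s \<in> {0..T}" for s
        using SP_sol_eta_diff_le_Roff[OF x S k, of s T] SP_sol_eta_diff_le_Roff[OF x S(2,1) k, of s T]
          that by (auto simp: sup_dev_commute)
      then show "sup_dev e e' T k \<le> Roff K (sup_dev e e' T) k"
        unfolding sup_dev_def using T by (intro cSup_least) auto
    qed
    then have "sup_dev e e' T i = 0"
      using Roff_subinvariant_eq_0[OF K _ i] by blast
    then show ?thesis
      using SP_sol_abs_diff_le_sup_dev[OF S T order_refl, of i] by simp
  qed
  have "e t i = e' t i" for t i
    using eta_eq[of t i] SP_sol_outside[OF S(1)] SP_sol_outside[OF S(2)]
    by (cases "t < 0 \<or> i \<notin> {1..K}") auto
  then have "e = e'" by blast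
  moreover have "y t i = y' t i" for t i
    using SP_sol_outside[OF S(1)] SP_sol_outside[OF S(2)] SP_sol_eq[OF S(1)] SP_sol_eq[OF S(2)] \<open>e = e'\<close>
    by (cases "t < 0 \<or> i \<notin> {1..K}") auto
  ultimately show ?thesis by blast
qed

lemma Gamma2_eqI:
  assumes "2 \<le> K" and "\<And>i. (\<lambda>t. x t i) \<in> borel_measurable borel" and "SP_sol K x e y"
  shows "Gamma2 K x = y"
proof -
  have "Gamma K x = (e, y)"
    unfolding Gamma_def using assms SP_sol_unique[OF assms(1,2)]
    by (intro the_equality) (auto simp: prod_eq_iff)
  then show ?thesis by (simp add: Gamma2_def)
qed

lemma nn_integral_interval_measure_zero: "(\<integral>\<^sup>+ t. f t \<partial>interval_measure (\<lambda>_. 0)) = 0"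
proof -
  have "emeasure (interval_measure (\<lambda>_. 0 :: real)) UNIV = 0"
    using interval_measure_UNIV[of "\<lambda>_. 0" 0] by simp
  then have "AE t in interval_measure (\<lambda>_. 0). f t = 0"
    by (intro AE_I'[of UNIV]) (auto intro: null_setsI)
  then show ?thesis
    by (simp add: nn_integral_cong_AE)
qed

definition ray :: "nat \<Rightarrow> (nat \<Rightarrow> real) \<Rightarrow> real \<Rightarrow> nat \<Rightarrow> real" where
  "ray K c t i = (if t < 0 \<or> i \<notin> {1..K} then 0 else t * c i)"

lemma SP_sol_ray:
  assumes c: "\<And>i. i \<in> {1..K} \<Longrightarrow> 0 \<le> c i"
    and w: "\<And>i. i \<in> {1..K} \<Longrightarrow> w i = v i + (\<Sum>j = 1..K. Rmat K i j * c j)"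
    and w_nonneg: "\<And>i. i \<in> {1..K} \<Longrightarrow> 0 \<le> w i"
    and complementary: "\<And>i. i \<in> {1..K} \<Longrightarrow> c i = 0 \<or> w i = 0"
  shows "SP_sol K (\<lambda>t i. t * v i) (ray K c) (ray K w)"
  unfolding SP_sol_def
proof (intro conjI ballI allI impI)
  fix t :: real and i assume "t < 0 \<or> i \<notin> {1..K}"
  then show "ray K c t i = 0" "ray K w t i = 0" by (auto simp: ray_def)
next
  fix t :: real and i assume t: "0 \<le> t" and i: "i \<in> {1..K}"
  have "(\<Sum>j = 1..K. Rmat K i j * ray K c t j) = t * (\<Sum>j = 1..K. Rmat K i j * c j)"
    using t by (auto simp: ray_def sum_distrib_left intro: sum.cong)
  then show "ray K w t i = t * v i + (\<Sum>j = 1..K. Rmat K i j * ray K c t j)"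
    using t i w[OF i] by (simp add: ray_def algebra_simps)
  show "0 \<le> ray K w t i" "0 \<le> ray K c t i"
    using t c[OF i] w_nonneg[OF i] by (auto simp: ray_def)
next
  fix i assume i: "i \<in> {1..K}"
  then have ray_eq: "(\<lambda>t. ray K c t i) = (\<lambda>t. max 0 t * c i)"
    by (auto simp: ray_def max_def)
  show "ray K c 0 i = 0" by (simp add: ray_def)
  show "mono (\<lambda>t. ray K c t i)"
    unfolding ray_eq using c[OF i] by (intro monoI mult_right_mono) auto
  show "continuous (at_right t) (\<lambda>t. ray K c t i)" for t
    unfolding ray_eq by (intro continuous_intros)
  show "(\<integral>\<^sup>+ t. ennreal (ray K w t i) * indicator {0..} t \<partial>interval_measure (\<lambda>t. ray K c t i)) = 0"
    using complementary[OF i]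
  proof
    assume "c i = 0"
    then show ?thesis by (simp add: ray_eq nn_integral_interval_measure_zero)
  next
    assume "w i = 0"
    then have "ray K w t i = 0" for t by (simp add: ray_def)
    then show ?thesis by simp
  qed
qed

text \<open>The solution of \<open>R c = v\<^sub>1 - v\<close> with \<open>c\<^sub>1 = 0\<close>.\<close>

definition push_rate :: "nat \<Rightarrow> real \<Rightarrow> nat \<Rightarrow> real" where
  "push_rate K b j = (if j = 1 then 0 else 2 * b * (real K + 1 - real j) / real K)"

lemma Rmat_push_rate:
  fixes a b :: real
  assumes K: "2 \<le> K" and i: "i \<in> {1..K}"
  shows "(if i = 1 then - a + b else if i = 2 then - b else 0) + (\<Sum>j = 1..K. Rmat K i j * push_rate K b j)
       = (if i = 1 then b / real K - a else 0)"
proof -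
  have "real K > 0" using K by simp
  consider "i = 1" | "i = 2" | "3 \<le> i" "i + 1 \<le> K" | "3 \<le> i" "i = K"
    using i by force
  then show ?thesis
    using K \<open>real K > 0\<close>
    by cases (subst sum_Rmat_eq[OF i]; auto simp: Roff_def push_rate_def of_nat_diff field_simps)+
qed

theorem lemma7p1:
  fixes K :: nat and a b :: real
  assumes "K \<ge> 2" and "a \<ge> 0" and "b > a * real K"
  defines "vv \<equiv> (\<lambda>i::nat. if i = 1 then - a + b else if i = 2 then - b else 0)"
      and "vv1 \<equiv> (\<lambda>i::nat. if i = 1 then b / real K - a else 0)"
  shows "\<forall>t \<ge> 0. \<forall>i \<in> {1..K}. Gamma2 K (\<lambda>t i. t * vv i) t i = t * vv1 i"
proof -
  have "real K > 0" using assms(1) by simp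
  moreover have "a * real K \<ge> 0" using assms(2) by simp
  ultimately have "b > 0" "b / real K - a > 0"
    using assms(3) by (simp_all add: field_simps)
  have "SP_sol K (\<lambda>t i. t * vv i) (ray K (push_rate K b)) (ray K vv1)"
  proof (rule SP_sol_ray)
    show "0 \<le> push_rate K b i" if "i \<in> {1..K}" for i
      using that \<open>b > 0\<close> \<open>real K > 0\<close> by (auto simp: push_rate_def)
    show "vv1 i = vv i + (\<Sum>j = 1..K. Rmat K i j * push_rate K b j)" if "i \<in> {1..K}" for i
      using Rmat_push_rate[OF assms(1) that] by (simp add: vv_def vv1_def)
    show "0 \<le> vv1 i" for i
      using \<open>b / real K - a > 0\<close> by (simp add: vv1_def)
    show "push_rate K b i = 0 \<or> vv1 i = 0" for i
      by (simp add: push_rate_def vv1_def)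
  qed
  then have "Gamma2 K (\<lambda>t i. t * vv i) = ray K vv1"
    using assms(1) by (intro Gamma2_eqI) auto
  then show ?thesis
    by (simp add: ray_def)
qed

end
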